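(* Let $p+q=4k+1$ with $k\ge1$. If $p-4\ge1$ and $q\ge1$, then $\mathbb{O}_{p,q}\simeq\mathbb{O}_{p-4,q+4}$. If $p\ge1$, $q-1\ge1$ and $p$ is even, then $\mathbb{O}_{p,q}\simeq\mathbb{O}_{p+1,q-1}$. (The isomorphisms preserve the $\mathbb{Z}_2^n$-graded structure.)
   Context: $\mathbb{Z}_2=\{0,1\}$. For $p+q=n\ge3$, $\mathbb{O}_{p,q}$ is the real algebra with basis $\{u_x: x\in\mathbb{Z}_2^n\}$ and product $u_x\cdot u_y=(-1)^{f(x,y)}u_{x+y}$, where $f(x,y)=\sum_{1\le i<j<k\le n}(x_ix_jy_k+x_iy_jx_k+y_ix_jx_k)+\sum_{1\le i\le j\le n}x_iy_j+\sum_{1\le i\le p}x_iy_i$. Homogeneous elements are scalar multiples of some $u_x$. *)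

theory Defs
  imports Complex_Main
begin

text \<open>Elements of Z_2^n are boolean lists of length n; index i (0-based) stands
  for coordinate i+1 of the paper.  Addition is coordinatewise xor.\<close>

definition Z2n :: "nat \<Rightarrow> bool list set" where
  "Z2n n = {x. length x = n}"

definition zadd :: "bool list \<Rightarrow> bool list \<Rightarrow> bool list" where
  "zadd x y = map2 (\<noteq>) x y"

definition bit :: "bool list \<Rightarrow> nat \<Rightarrow> nat" where
  "bit x i = (if x ! i then 1 else 0)"

definition ftw :: "nat \<Rightarrow> nat \<Rightarrow> bool list \<Rightarrow> bool list \<Rightarrow> nat" where
  "ftw p q x y =
     (\<Sum>(i,j,k) \<in> {(i,j,k). i < j \<and> j < k \<and> k < p + q}.
         bit x i * bit x j * bit y k + bit x i * bit y j * bit x k + bit y i * bit x j * bit x k)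
   + (\<Sum>(i,j) \<in> {(i,j). i \<le> j \<and> j < p + q}. bit x i * bit y j)
   + (\<Sum>i<p. bit x i * bit y i)"

text \<open>The algebra O_{p,q}: real coefficient functions on Z_2^n (vanishing outside),
  i.e. a = sum_x a(x) u_x, with the bilinear product extending
  u_x u_y = (-1)^{f(x,y)} u_{x+y}.\<close>

definition Ocarrier :: "nat \<Rightarrow> nat \<Rightarrow> (bool list \<Rightarrow> real) set" where
  "Ocarrier p q = {a. \<forall>x. x \<notin> Z2n (p + q) \<longrightarrow> a x = 0}"

definition Omult :: "nat \<Rightarrow> nat \<Rightarrow> (bool list \<Rightarrow> real) \<Rightarrow> (bool list \<Rightarrow> real) \<Rightarrow> (bool list \<Rightarrow> real)" where
  "Omult p q a b = (\<lambda>z. \<Sum>(x,y) \<in> {(x,y). x \<in> Z2n (p + q) \<and> y \<in> Z2n (p + q) \<and> zadd x y = z}.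
                        (-1) ^ ftw p q x y * a x * b y)"

definition Ubasis :: "bool list \<Rightarrow> (bool list \<Rightarrow> real)" where
  "Ubasis x = (\<lambda>y. if y = x then 1 else 0)"

definition Ocomp :: "nat \<Rightarrow> nat \<Rightarrow> bool list \<Rightarrow> (bool list \<Rightarrow> real) set" where
  "Ocomp p q x = {a \<in> Ocarrier p q. \<forall>y. y \<noteq> x \<longrightarrow> a y = 0}"

definition Ograded_iso :: "nat \<Rightarrow> nat \<Rightarrow> nat \<Rightarrow> nat \<Rightarrow> ((bool list \<Rightarrow> real) \<Rightarrow> (bool list \<Rightarrow> real)) \<Rightarrow> bool" where
  "Ograded_iso p q p' q' \<psi> \<longleftrightarrow>
     p + q = p' + q' \<and>
     bij_betw \<psi> (Ocarrier p q) (Ocarrier p' q') \<and>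
     (\<forall>a \<in> Ocarrier p q. \<forall>b \<in> Ocarrier p q. \<psi> (\<lambda>x. a x + b x) = (\<lambda>x. \<psi> a x + \<psi> b x)) \<and>
     (\<forall>a \<in> Ocarrier p q. \<forall>c::real. \<psi> (\<lambda>x. c * a x) = (\<lambda>x. c * \<psi> a x)) \<and>
     (\<forall>a \<in> Ocarrier p q. \<forall>b \<in> Ocarrier p q. \<psi> (Omult p q a b) = Omult p' q' (\<psi> a) (\<psi> b)) \<and>
     (\<exists>\<phi>. bij_betw \<phi> (Z2n (p + q)) (Z2n (p' + q')) \<and>
          (\<forall>x \<in> Z2n (p + q). \<psi> ` Ocomp p q x = Ocomp p' q' (\<phi> x)))"

definition Ograded_isomorphic :: "nat \<Rightarrow> nat \<Rightarrow> nat \<Rightarrow> nat \<Rightarrow> bool" where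
  "Ograded_isomorphic p q p' q' \<longleftrightarrow> (\<exists>\<psi>. Ograded_iso p q p' q' \<psi>)"

end

theory Submission
  imports Defs "HOL-Library.Z2" "HOL-Library.Function_Algebras"
begin

text \<open>
  Read modulo 2, the twisting function f of O_{p,q} is a cubic form on F_2^n whose coboundary is
  a symmetric trilinear form determined by the polarization of q(x) = f(x, x).  Hence, if a linear
  automorphism \<phi> of F_2^n carries the form q of O_{p,q} to that of O_{p',q'}, the pulled-back twist
  differs from f by a symmetric cocycle vanishing on the diagonal, which over F_2 is a coboundary
  s(x) + s(y) + s(x + y); the map u_x \<mapsto> (-1)^{s(x)} u_{\<phi> x} is then a graded isomorphism.
  The form q(x) depends only on |x| mod 4 and on the parity of the number of coordinates of x
  beyond p.  Permutations of coordinates and two transvections (through a pair of coordinates,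
  and through six coordinates of which exactly one lies beyond p) show that the forms for p and
  p - 4 agree when 5 \<le> p < n, and that the forms for p and n - p agree; for n \<equiv> 1 mod 4 and
  p even, n - p \<equiv> p + 1 mod 4, which gives both isomorphisms.
\<close>

\<comment> \<open>Keep bit arithmetic in ring form, so that \<open>ac_simps\<close> and cancellation apply.\<close>
declare add_bit_eq_xor [simp del] mult_bit_eq_and [simp del]

lemma bit_add_self [simp]: "(a::bit) + a = 0"
  by (cases a) auto

lemma bit_mult_self [simp]: "(a::bit) * a = a"
  by (cases a) auto

lemma bit_add_eq_0_iff: "(a::bit) + b = 0 \<longleftrightarrow> a = b"
  by (cases a; cases b) auto

lemma bit_eq_iff_add_eq_0: "(a::bit) = b \<longleftrightarrow> a + b = 0"
  by (cases a; cases b) auto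

lemma of_nat_bit_eq: "(of_nat m :: bit) = of_bool (odd m)"
  by (induction m) auto

section \<open>Symmetric cocycles on Z_2^n\<close>

lemma zadd_Cons [simp]: "zadd (a # x) (b # y) = (a \<noteq> b) # zadd x y"
  by (simp add: zadd_def)

lemma zadd_Nil [simp]: "zadd [] y = []" "zadd x [] = []"
  by (simp_all add: zadd_def)

lemma length_zadd [simp]: "length (zadd x y) = min (length x) (length y)"
  by (simp add: zadd_def)

lemma zadd_commute: "zadd x y = zadd y x"
proof (induction x arbitrary: y)
  case (Cons a x)
  then show ?case by (cases y) auto
qed (simp add: zadd_def)

lemma zadd_replicate_False: "length x = n \<Longrightarrow> zadd (replicate n False) x = x"
  by (induction x arbitrary: n) (auto simp: zadd_def)

lemma zadd_zadd_cancel: "length x = length y \<Longrightarrow> zadd x (zadd x y) = y"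
  by (induction x y rule: list_induct2) auto

lemma zadd_in_Z2n: "x \<in> Z2n n \<Longrightarrow> y \<in> Z2n n \<Longrightarrow> zadd x y \<in> Z2n n"
  by (simp add: Z2n_def)

lemma Cons_in_Z2n_Suc [simp]: "b # x \<in> Z2n (Suc n) \<longleftrightarrow> x \<in> Z2n n"
  by (simp add: Z2n_def)

lemma Z2n_Suc_cases:
  assumes "a \<in> Z2n (Suc n)"
  obtains b x where "a = b # x" "x \<in> Z2n n"
  using assms by (cases a) (auto simp: Z2n_def)

text \<open>
  The cocycle identities at (e, 0x, 0y) and (1x, e, 0y), with e the first unit vector, express D
  through its restriction to the hyperplane of vectors 0x and the values t x = D e (0x).
\<close>

lemma symmetric_cocycle_Cons:
  fixes D :: "bool list \<Rightarrow> bool list \<Rightarrow> bit"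
  assumes sym: "\<And>a b. a \<in> Z2n (Suc n) \<Longrightarrow> b \<in> Z2n (Suc n) \<Longrightarrow> D a b = D b a"
    and alt: "\<And>a. a \<in> Z2n (Suc n) \<Longrightarrow> D a a = 0"
    and cocycle: "\<And>a b c. a \<in> Z2n (Suc n) \<Longrightarrow> b \<in> Z2n (Suc n) \<Longrightarrow> c \<in> Z2n (Suc n) \<Longrightarrow>
        D b c + D (zadd a b) c + D a (zadd b c) + D a b = 0"
    and x: "x \<in> Z2n n" and y: "y \<in> Z2n n"
  defines "t \<equiv> \<lambda>z. D (True # replicate n False) (False # z)"
  shows "D (b # x) (c # y) = D (False # x) (False # y)
           + of_bool b * t x + of_bool c * t y + of_bool (b \<noteq> c) * t (zadd x y)"
proof -
  define e where "e = True # replicate n False"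
  define z where "z = replicate (Suc n) False"
  have e: "e \<in> Z2n (Suc n)" and z: "z \<in> Z2n (Suc n)"
    by (simp_all add: e_def z_def Z2n_def)
  have e_add: "zadd e (b # w) = (\<not> b) # w" if "w \<in> Z2n n" for b w
    using that by (simp add: e_def zadd_replicate_False Z2n_def)
  then have add_e: "zadd (b # w) e = (\<not> b) # w" if "w \<in> Z2n n" for b w
    using that zadd_commute by metis
  have x': "b # x \<in> Z2n (Suc n)" and y': "b # y \<in> Z2n (Suc n)" for b
    using x y by simp_all
  have z_left: "D z a = 0" if "a \<in> Z2n (Suc n)" for a
  proof -
    have "zadd z z = z" "zadd z a = a"
      using that zadd_replicate_False[of _ "Suc n"]
      by (simp_all add: z_def Z2n_def del: replicate_Suc)
    then show ?thesis
      using cocycle[OF z z that] alt[OF z] by simp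
  qed
  have True_False: "D (True # x) (False # y) = D (False # x) (False # y) + t x + t (zadd x y)"
    if x: "x \<in> Z2n n" and y: "y \<in> Z2n n" for x y
  proof -
    have "D (False # x) (False # y) + D (True # x) (False # y) + t (zadd x y) + t x = 0"
      using cocycle[OF e, of "False # x" "False # y"] x y e_add[OF x] by (simp add: t_def e_def)
    then show ?thesis by (subst bit_eq_iff_add_eq_0) (simp add: ac_simps)
  qed
  show ?thesis
  proof (cases b; cases c)
    assume "b" "c"
    have "D e (True # x) = t x"
      using cocycle[OF e e x'[of False]] e_add[OF x] z_left[OF x'] alt[OF e]
        zadd_replicate_False[of "replicate n False" n]
      by (simp add: t_def e_def z_def bit_add_eq_0_iff)
    then have "D (True # x) e = t x"
      using sym[OF e x'] by simp
    moreover have "t y + D (False # x) (False # y) + D (True # x) (True # y) + D (True # x) e = 0"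
      using cocycle[OF x'[of True] e y'[of False]] add_e[OF x] e_add[OF y]
      by (simp add: t_def e_def)
    ultimately show ?thesis
      using \<open>b\<close> \<open>c\<close> by (subst bit_eq_iff_add_eq_0) (simp add: ac_simps)
  next
    assume "\<not> b" "c"
    then show ?thesis
      using True_False[OF y x] sym[OF x' y'] zadd_commute[of x y] by (simp add: ac_simps)
  qed (simp_all add: True_False[OF x y])
qed

lemma symmetric_cocycle_is_coboundary:
  fixes D :: "bool list \<Rightarrow> bool list \<Rightarrow> bit"
  assumes "\<And>a b. a \<in> Z2n n \<Longrightarrow> b \<in> Z2n n \<Longrightarrow> D a b = D b a"
    and "\<And>a. a \<in> Z2n n \<Longrightarrow> D a a = 0"
    and "\<And>a b c. a \<in> Z2n n \<Longrightarrow> b \<in> Z2n n \<Longrightarrow> c \<in> Z2n n \<Longrightarrow>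
        D b c + D (zadd a b) c + D a (zadd b c) + D a b = 0"
  shows "\<exists>s. \<forall>a\<in>Z2n n. \<forall>b\<in>Z2n n. D a b = s a + s b + s (zadd a b)"
  using assms
proof (induction n arbitrary: D)
  case 0
  have "Z2n 0 = {[]}"
    by (auto simp: Z2n_def)
  then show ?case
    using "0.prems"(2) by (intro exI[of _ "\<lambda>_. 0"]) simp
next
  case (Suc n)
  have "\<exists>s0. \<forall>x\<in>Z2n n. \<forall>y\<in>Z2n n. D (False # x) (False # y) = s0 x + s0 y + s0 (zadd x y)"
  proof (rule Suc.IH)
    show "D (False # a) (False # b) = D (False # b) (False # a)" if "a \<in> Z2n n" "b \<in> Z2n n" for a b
      using that Suc.prems(1)[of "False # a" "False # b"] by simp
    show "D (False # a) (False # a) = 0" if "a \<in> Z2n n" for a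
      using that Suc.prems(2)[of "False # a"] by simp
    show "D (False # b) (False # c) + D (False # zadd a b) (False # c)
        + D (False # a) (False # zadd b c) + D (False # a) (False # b) = 0" if "a \<in> Z2n n" "b \<in> Z2n n" "c \<in> Z2n n" for a b c
      using that Suc.prems(3)[of "False # a" "False # b" "False # c"] by simp
  qed
  then obtain s0
    where s0: "\<forall>x\<in>Z2n n. \<forall>y\<in>Z2n n. D (False # x) (False # y) = s0 x + s0 y + s0 (zadd x y)"
    by blast
  define t where "t z = D (True # replicate n False) (False # z)" for z
  define s where "s a = s0 (tl a) + of_bool (hd a) * t (tl a)" for a
  show ?case
  proof (intro exI[of _ s] ballI)
    fix a b assume "a \<in> Z2n (Suc n)" "b \<in> Z2n (Suc n)"
    then obtain c x d y where ab: "a = c # x" "b = d # y" and x: "x \<in> Z2n n" and y: "y \<in> Z2n n"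
      by (metis Z2n_Suc_cases)
    show "D a b = s a + s b + s (zadd a b)"
      using symmetric_cocycle_Cons[OF Suc.prems x y, of c d] s0 x y unfolding ab
      by (cases c; cases d) (simp_all add: s_def t_def ac_simps)
  qed
qed

section \<open>The twisting function as a cubic form over F_2\<close>

definition triples :: "nat \<Rightarrow> (nat \<times> nat \<times> nat) set" where
  "triples n = {(i, j, k). i < j \<and> j < k \<and> k < n}"

definition pairs_le :: "nat \<Rightarrow> (nat \<times> nat) set" where
  "pairs_le n = {(i, j). i \<le> j \<and> j < n}"

definition pairs_lt :: "nat \<Rightarrow> (nat \<times> nat) set" where
  "pairs_lt n = {(i, j). i < j \<and> j < n}"

lemma finite_pairs_lt [simp]: "finite (pairs_lt n)"
  by (rule finite_subset[of _ "{..<n} \<times> {..<n}"]) (auto simp: pairs_lt_def)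

lemma finite_triples [simp]: "finite (triples n)"
  by (rule finite_subset[of _ "{..<n} \<times> {..<n} \<times> {..<n}"]) (auto simp: triples_def)

lemma finite_pairs_le [simp]: "finite (pairs_le n)"
  by (rule finite_subset[of _ "{..<n} \<times> {..<n}"]) (auto simp: pairs_le_def)

definition cubic_form :: "nat \<Rightarrow> (nat \<Rightarrow> bit) \<Rightarrow> (nat \<Rightarrow> bit) \<Rightarrow> bit" where
  "cubic_form n u v = (\<Sum>(i, j, k)\<in>triples n. u i * u j * v k + u i * v j * u k + v i * u j * u k)"

definition cubic_polar :: "nat \<Rightarrow> (nat \<Rightarrow> bit) \<Rightarrow> (nat \<Rightarrow> bit) \<Rightarrow> (nat \<Rightarrow> bit) \<Rightarrow> bit" where
  "cubic_polar n u v w = (\<Sum>(i, j, k)\<in>triples n.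
     u i * v j * w k + v i * u j * w k + u i * w j * v k
     + v i * w j * u k + w i * u j * v k + w i * v j * u k)"

definition order_form :: "nat \<Rightarrow> (nat \<Rightarrow> bit) \<Rightarrow> (nat \<Rightarrow> bit) \<Rightarrow> bit" where
  "order_form n u v = (\<Sum>(i, j)\<in>pairs_le n. u i * v j)"

definition diag_form :: "nat \<Rightarrow> nat set \<Rightarrow> (nat \<Rightarrow> bit) \<Rightarrow> (nat \<Rightarrow> bit) \<Rightarrow> bit" where
  "diag_form n P u v = (\<Sum>i<n. of_bool (i \<in> P) * u i * v i)"

\<comment> \<open>f(x, y) mod 2 as a polynomial in the indicator vectors of x and y, cf. \<open>ftw_mod_2\<close>.\<close>

definition twist :: "nat \<Rightarrow> nat set \<Rightarrow> (nat \<Rightarrow> bit) \<Rightarrow> (nat \<Rightarrow> bit) \<Rightarrow> bit" where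
  "twist n P u v = cubic_form n u v + order_form n u v + diag_form n P u v"

definition twist_sym :: "nat \<Rightarrow> nat set \<Rightarrow> (nat \<Rightarrow> bit) \<Rightarrow> (nat \<Rightarrow> bit) \<Rightarrow> bit" where
  "twist_sym n P u v = twist n P u v + twist n P v u"

lemma cubic_form_add_right: "cubic_form n u (v + w) = cubic_form n u v + cubic_form n u w"
  by (simp add: cubic_form_def split_def algebra_simps sum.distrib)

lemma cubic_form_add_left:
  "cubic_form n (u + v) w = cubic_form n u w + cubic_form n v w + cubic_polar n u v w"
  by (simp add: cubic_form_def cubic_polar_def split_def algebra_simps sum.distrib)

lemma cubic_polar_self:
  "cubic_polar n u v u = 0" "cubic_polar n u v v = 0"
  unfolding cubic_polar_def by (auto intro!: sum.neutral simp: ac_simps)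

lemma order_form_add:
  "order_form n (u + v) w = order_form n u w + order_form n v w"
  "order_form n u (v + w) = order_form n u v + order_form n u w"
  by (simp_all add: order_form_def split_def algebra_simps sum.distrib)

lemma diag_form_add:
  "diag_form n P (u + v) w = diag_form n P u w + diag_form n P v w"
  "diag_form n P u (v + w) = diag_form n P u v + diag_form n P u w"
  by (simp_all add: diag_form_def algebra_simps sum.distrib)

lemmas twist_add = cubic_form_add_left cubic_form_add_right order_form_add diag_form_add

lemma twist_coboundary:
  "twist n P v w + twist n P (u + v) w + twist n P u (v + w) + twist n P u v = cubic_polar n u v w"
  by (simp add: twist_def twist_add ac_simps)

lemma twist_sym_polarization:
  "twist_sym n P u v = twist n P (u + v) (u + v) + twist n P u u + twist n P v v"
  by (simp add: twist_sym_def twist_def twist_add cubic_polar_self ac_simps)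

lemma cubic_polar_eq_twist_sym:
  "cubic_polar n u v w = twist_sym n P (u + v) w + twist_sym n P u w + twist_sym n P v w"
  by (simp add: twist_sym_def twist_def twist_add ac_simps)

definition bitvec :: "bool list \<Rightarrow> nat \<Rightarrow> bit" where
  "bitvec x i = of_bool (i < length x \<and> x ! i)"

lemma bitvec_zadd: "length x = length y \<Longrightarrow> bitvec (zadd x y) = bitvec x + bitvec y"
  by (auto simp: bitvec_def zadd_def fun_eq_iff)

lemma twist_cohomologous_if_square_preserved:
  assumes maps: "\<And>x. x \<in> Z2n n \<Longrightarrow> \<phi> x \<in> Z2n n"
    and additive: "\<And>x y. x \<in> Z2n n \<Longrightarrow> y \<in> Z2n n \<Longrightarrow> \<phi> (zadd x y) = zadd (\<phi> x) (\<phi> y)"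
    and square: "\<And>x. x \<in> Z2n n \<Longrightarrow>
      twist n P' (bitvec (\<phi> x)) (bitvec (\<phi> x)) = twist n P (bitvec x) (bitvec x)"
  shows "\<exists>s. \<forall>x\<in>Z2n n. \<forall>y\<in>Z2n n.
    twist n P' (bitvec (\<phi> x)) (bitvec (\<phi> y))
      = twist n P (bitvec x) (bitvec y) + s x + s y + s (zadd x y)"
proof -
  let ?u = "\<lambda>x. bitvec x" and ?v = "\<lambda>x. bitvec (\<phi> x)"
  have u_add: "?u (zadd x y) = ?u x + ?u y" and v_add: "?v (zadd x y) = ?v x + ?v y"
    if "x \<in> Z2n n" "y \<in> Z2n n" for x y
    using that maps[OF that(1)] maps[OF that(2)] by (simp_all add: additive bitvec_zadd Z2n_def)
  have sym_preserved: "twist_sym n P' (?v x) (?v y) = twist_sym n P (?u x) (?u y)"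
    if "x \<in> Z2n n" "y \<in> Z2n n" for x y
    using that
    by (simp add: twist_sym_polarization u_add[symmetric] v_add[symmetric] square zadd_in_Z2n)
  define D where "D x y = twist n P (?u x) (?u y) + twist n P' (?v x) (?v y)" for x y
  have "\<exists>s. \<forall>x\<in>Z2n n. \<forall>y\<in>Z2n n. D x y = s x + s y + s (zadd x y)"
  proof (rule symmetric_cocycle_is_coboundary)
    show "D x y = D y x" if "x \<in> Z2n n" "y \<in> Z2n n" for x y
      using sym_preserved[OF that]
      by (subst bit_eq_iff_add_eq_0) (simp add: D_def twist_sym_def bit_add_eq_0_iff ac_simps)
    show "D x x = 0" if "x \<in> Z2n n" for x
      using square[OF that] by (simp add: D_def)
    show "D y z + D (zadd x y) z + D x (zadd y z) + D x y = 0"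
      if "x \<in> Z2n n" "y \<in> Z2n n" "z \<in> Z2n n" for x y z
    proof -
      have "D y z + D (zadd x y) z + D x (zadd y z) + D x y
          = (twist n P (?u y) (?u z) + twist n P (?u x + ?u y) (?u z)
              + twist n P (?u x) (?u y + ?u z) + twist n P (?u x) (?u y))
            + (twist n P' (?v y) (?v z) + twist n P' (?v x + ?v y) (?v z)
              + twist n P' (?v x) (?v y + ?v z) + twist n P' (?v x) (?v y))"
        using that by (simp add: D_def u_add v_add ac_simps)
      also have "\<dots> = cubic_polar n (?u x) (?u y) (?u z) + cubic_polar n (?v x) (?v y) (?v z)"
        by (simp only: twist_coboundary)
      also have "\<dots> = 0"
        unfolding cubic_polar_eq_twist_sym[of n "?u x" "?u y" "?u z" P]
          cubic_polar_eq_twist_sym[of n "?v x" "?v y" "?v z" P']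
        using that by (simp add: u_add[symmetric] v_add[symmetric] sym_preserved zadd_in_Z2n)
      finally show ?thesis .
    qed
  qed
  then obtain s where "\<forall>x\<in>Z2n n. \<forall>y\<in>Z2n n. D x y = s x + s y + s (zadd x y)"
    by blast
  then show ?thesis
    by (intro exI[of _ s]) (auto simp: D_def bit_eq_iff_add_eq_0[of "twist n P' _ _"] ac_simps)
qed

lemma of_nat_Defs_bit: "i < length x \<Longrightarrow> (of_nat (Defs.bit x i) :: bit) = bitvec x i"
  by (simp add: Defs.bit_def bitvec_def)

lemma ftw_mod_2:
  assumes "x \<in> Z2n (p + q)" "y \<in> Z2n (p + q)"
  shows "(of_nat (ftw p q x y) :: bit) = twist (p + q) {..<p} (bitvec x) (bitvec y)"
proof -
  have len: "length x = p + q" "length y = p + q"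
    using assms by (simp_all add: Z2n_def)
  have "diag_form (p + q) {..<p} (bitvec x) (bitvec y) = (\<Sum>i<p. bitvec x i * bitvec y i)"
    unfolding diag_form_def by (rule sum.mono_neutral_cong_right) auto
  then show ?thesis
    unfolding ftw_def twist_def cubic_form_def order_form_def triples_def pairs_le_def
    by (simp add: of_nat_sum len of_nat_Defs_bit split_def)
qed

section \<open>Graded isomorphisms from cohomologous twists\<close>

definition bit_sign :: "bit \<Rightarrow> real" where
  "bit_sign b = (if b = 0 then 1 else -1)"

lemma bit_sign_add: "bit_sign (a + b) = bit_sign a * bit_sign b"
  by (cases a; cases b) (auto simp: bit_sign_def)

lemma minus_one_power_eq_bit_sign: "(-1::real) ^ m = bit_sign (of_nat m)"
  by (simp add: bit_sign_def of_nat_bit_eq)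

lemma Omult_eq_sum:
  assumes "z \<in> Z2n (p + q)"
  shows "Omult p q a b z =
    (\<Sum>x\<in>Z2n (p + q). (-1) ^ ftw p q x (zadd x z) * a x * b (zadd x z))"
proof -
  have "{(x, y). x \<in> Z2n (p + q) \<and> y \<in> Z2n (p + q) \<and> zadd x y = z}
      = (\<lambda>x. (x, zadd x z)) ` Z2n (p + q)"
    using assms by (auto simp: Z2n_def zadd_zadd_cancel)
  moreover have "inj_on (\<lambda>x. (x, zadd x z)) (Z2n (p + q))"
    by (rule inj_onI) simp
  ultimately show ?thesis
    by (simp add: Omult_def sum.reindex)
qed

lemma Omult_outside: "z \<notin> Z2n (p + q) \<Longrightarrow> Omult p q a b z = 0"
  by (auto simp: Omult_def Z2n_def intro!: sum.neutral)

locale graded_transport =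
  fixes p q p' q' :: nat and \<phi> :: "bool list \<Rightarrow> bool list" and \<sigma> :: "bool list \<Rightarrow> real"
  assumes dim: "p' + q' = p + q"
    and bij: "bij_betw \<phi> (Z2n (p + q)) (Z2n (p + q))"
    and additive: "\<And>x y. x \<in> Z2n (p + q) \<Longrightarrow> y \<in> Z2n (p + q) \<Longrightarrow> \<phi> (zadd x y) = zadd (\<phi> x) (\<phi> y)"
    and sign_square: "\<And>x. \<sigma> x * \<sigma> x = 1"
    and twist_sign: "\<And>x y. x \<in> Z2n (p + q) \<Longrightarrow> y \<in> Z2n (p + q) \<Longrightarrow>
      (-1::real) ^ ftw p' q' (\<phi> x) (\<phi> y) = (-1) ^ ftw p q x y * \<sigma> x * \<sigma> y * \<sigma> (zadd x y)"
begin

abbreviation "V \<equiv> Z2n (p + q)"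

definition \<phi>_inv :: "bool list \<Rightarrow> bool list" where
  "\<phi>_inv = the_inv_into V \<phi>"

\<comment> \<open>The linear map sending u_x to \<sigma> x \<cdot> u_{\<phi> x}.\<close>
definition transport :: "(bool list \<Rightarrow> real) \<Rightarrow> bool list \<Rightarrow> real" where
  "transport a z = (if z \<in> V then \<sigma> (\<phi>_inv z) * a (\<phi>_inv z) else 0)"

definition untransport :: "(bool list \<Rightarrow> real) \<Rightarrow> bool list \<Rightarrow> real" where
  "untransport b x = (if x \<in> V then \<sigma> x * b (\<phi> x) else 0)"

lemma \<phi>_in: "x \<in> V \<Longrightarrow> \<phi> x \<in> V"
  using bij_betw_apply[OF bij] .

lemma \<phi>_inv_in: "z \<in> V \<Longrightarrow> \<phi>_inv z \<in> V"
  unfolding \<phi>_inv_def using bij_betw_apply[OF bij_betw_the_inv_into[OF bij]] .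

lemma \<phi>_\<phi>_inv [simp]: "z \<in> V \<Longrightarrow> \<phi> (\<phi>_inv z) = z"
  unfolding \<phi>_inv_def using f_the_inv_into_f_bij_betw[OF bij] .

lemma \<phi>_inv_\<phi> [simp]: "x \<in> V \<Longrightarrow> \<phi>_inv (\<phi> x) = x"
  unfolding \<phi>_inv_def using the_inv_into_f_f bij bij_betw_def by metis

lemma carriers: "Ocarrier p q = {a. \<forall>x. x \<notin> V \<longrightarrow> a x = 0}" "Ocarrier p' q' = Ocarrier p q"
  by (simp_all add: Ocarrier_def dim)

lemma transport_\<phi> [simp]: "x \<in> V \<Longrightarrow> transport a (\<phi> x) = \<sigma> x * a x"
  by (simp add: transport_def \<phi>_in)

lemma transport_untransport: "b \<in> Ocarrier p q \<Longrightarrow> transport (untransport b) = b"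
  by (auto simp: fun_eq_iff transport_def untransport_def carriers \<phi>_inv_in
      mult.assoc[symmetric] sign_square)

lemma untransport_transport: "a \<in> Ocarrier p q \<Longrightarrow> untransport (transport a) = a"
  by (auto simp: fun_eq_iff untransport_def carriers \<phi>_in mult.assoc[symmetric] sign_square)

lemma bij_transport: "bij_betw transport (Ocarrier p q) (Ocarrier p' q')"
  by (rule bij_betw_byWitness[where f' = untransport])
    (auto simp: transport_untransport untransport_transport carriers transport_def untransport_def)

lemma transport_Omult: "transport (Omult p q a b) = Omult p' q' (transport a) (transport b)"
proof
  fix z
  show "transport (Omult p q a b) z = Omult p' q' (transport a) (transport b) z"
  proof (cases "z \<in> V")
    case False
    then show ?thesis
      using Omult_outside[of z p' q'] by (simp add: transport_def dim)
  next
    case True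
    define w where "w = \<phi>_inv z"
    have w: "w \<in> V" "z = \<phi> w"
      using True by (simp_all add: w_def \<phi>_inv_in)
    have summand:
      "(-1) ^ ftw p' q' (\<phi> x) (zadd (\<phi> x) z) * transport a (\<phi> x) * transport b (zadd (\<phi> x) z)
        = \<sigma> w * ((-1) ^ ftw p q x (zadd x w) * a x * b (zadd x w))" if x: "x \<in> V" for x
    proof -
      have xw: "zadd x w \<in> V" "zadd x (zadd x w) = w"
        using x w by (simp_all add: zadd_in_Z2n zadd_zadd_cancel Z2n_def)
      have "zadd (\<phi> x) z = \<phi> (zadd x w)"
        using x w by (simp add: additive)
      then show ?thesis
        using twist_sign[OF x xw(1)] sign_square[of x] sign_square[of "zadd x w"] x xw
        by (simp add: ac_simps)
    qed
    have "Omult p' q' (transport a) (transport b) z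
        = (\<Sum>x\<in>V. (-1) ^ ftw p' q' x (zadd x z) * transport a x * transport b (zadd x z))"
      using True Omult_eq_sum[of z p' q'] by (simp add: dim)
    also have "\<dots> = (\<Sum>x\<in>V. (-1) ^ ftw p' q' (\<phi> x) (zadd (\<phi> x) z)
        * transport a (\<phi> x) * transport b (zadd (\<phi> x) z))"
      by (rule sum.reindex_bij_betw[OF bij, symmetric])
    also have "\<dots> = (\<Sum>x\<in>V. \<sigma> w * ((-1) ^ ftw p q x (zadd x w) * a x * b (zadd x w)))"
      by (rule sum.cong[OF refl summand])
    also have "\<dots> = \<sigma> w * Omult p q a b w"
      using Omult_eq_sum[OF w(1)] by (simp add: sum_distrib_left)
    also have "\<dots> = transport (Omult p q a b) z"
      using True by (simp add: transport_def w_def)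
    finally show ?thesis ..
  qed
qed

lemma transport_Ocomp:
  assumes x: "x \<in> V"
  shows "transport ` Ocomp p q x = Ocomp p' q' (\<phi> x)"
proof
  show "transport ` Ocomp p q x \<subseteq> Ocomp p' q' (\<phi> x)"
  proof clarify
    fix a assume "a \<in> Ocomp p q x"
    then have "a \<in> Ocarrier p q" "\<And>y. y \<noteq> x \<Longrightarrow> a y = 0"
      by (auto simp: Ocomp_def)
    moreover have "\<phi>_inv y \<noteq> x" if "y \<in> V" "y \<noteq> \<phi> x" for y
      using that by auto
    ultimately show "transport a \<in> Ocomp p' q' (\<phi> x)"
      using bij_betw_apply[OF bij_transport] by (auto simp: Ocomp_def transport_def)
  qed
  show "Ocomp p' q' (\<phi> x) \<subseteq> transport ` Ocomp p q x"
  proof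
    fix c assume "c \<in> Ocomp p' q' (\<phi> x)"
    then have c: "c \<in> Ocarrier p q" "\<And>y. y \<noteq> \<phi> x \<Longrightarrow> c y = 0"
      by (auto simp: Ocomp_def carriers)
    have "\<phi> y \<noteq> \<phi> x" if "y \<in> V" "y \<noteq> x" for y
      using that x bij by (metis \<phi>_inv_\<phi>)
    then have "untransport c \<in> Ocomp p q x"
      using c by (auto simp: Ocomp_def carriers untransport_def)
    then show "c \<in> transport ` Ocomp p q x"
      using transport_untransport[OF c(1)] by (metis image_eqI)
  qed
qed

lemma Ograded_iso_transport: "Ograded_iso p q p' q' transport"
  unfolding Ograded_iso_def
proof (intro conjI ballI allI)
  show "p + q = p' + q'"
    by (simp add: dim)
  show "bij_betw transport (Ocarrier p q) (Ocarrier p' q')"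
    by (rule bij_transport)
  show "transport (\<lambda>x. a x + b x) = (\<lambda>x. transport a x + transport b x)" for a b
    by (simp add: transport_def fun_eq_iff distrib_left)
  show "transport (\<lambda>x. c * a x) = (\<lambda>x. c * transport a x)" for a c
    by (simp add: transport_def fun_eq_iff ac_simps)
  show "transport (Omult p q a b) = Omult p' q' (transport a) (transport b)" for a b
    by (rule transport_Omult)
  show "\<exists>\<phi>. bij_betw \<phi> V (Z2n (p' + q')) \<and> (\<forall>x\<in>V. transport ` Ocomp p q x = Ocomp p' q' (\<phi> x))"
    using bij transport_Ocomp dim by auto
qed

end

lemma Ograded_isomorphic_if_twist_cohomologous:
  assumes dim: "p' + q' = p + q"
    and bij: "bij_betw \<phi> (Z2n (p + q)) (Z2n (p + q))"
    and additive: "\<And>x y. x \<in> Z2n (p + q) \<Longrightarrow> y \<in> Z2n (p + q) \<Longrightarrow> \<phi> (zadd x y) = zadd (\<phi> x) (\<phi> y)"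
    and s: "\<And>x y. x \<in> Z2n (p + q) \<Longrightarrow> y \<in> Z2n (p + q) \<Longrightarrow>
      twist (p + q) {..<p'} (bitvec (\<phi> x)) (bitvec (\<phi> y))
        = twist (p + q) {..<p} (bitvec x) (bitvec y) + s x + s y + s (zadd x y)"
  shows "Ograded_isomorphic p q p' q'"
proof -
  interpret graded_transport p q p' q' \<phi> "\<lambda>x. bit_sign (s x)"
  proof
    show "bit_sign (s x) * bit_sign (s x) = 1" for x
      by (simp add: bit_sign_def)
    show "(-1::real) ^ ftw p' q' (\<phi> x) (\<phi> y)
        = (-1) ^ ftw p q x y * bit_sign (s x) * bit_sign (s y) * bit_sign (s (zadd x y))"
      if "x \<in> Z2n (p + q)" "y \<in> Z2n (p + q)" for x y
      using that ftw_mod_2[of "\<phi> x" p' q' "\<phi> y"] ftw_mod_2[of x p q y] s[OF that]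
        bij_betw_apply[OF bij]
      by (simp add: minus_one_power_eq_bit_sign bit_sign_add dim)
  qed (use dim bij additive in auto)
  show ?thesis
    using Ograded_iso_transport unfolding Ograded_isomorphic_def by blast
qed

section \<open>The square form\<close>

definition support :: "nat \<Rightarrow> (nat \<Rightarrow> bit) \<Rightarrow> nat set" where
  "support n u = {i. i < n \<and> u i = 1}"

definition esym2 :: "nat \<Rightarrow> (nat \<Rightarrow> bit) \<Rightarrow> bit" where
  "esym2 n u = (\<Sum>(i, j)\<in>pairs_lt n. u i * u j)"

definition esym3 :: "nat \<Rightarrow> (nat \<Rightarrow> bit) \<Rightarrow> bit" where
  "esym3 n u = (\<Sum>(i, j, k)\<in>triples n. u i * u j * u k)"

lemma card_support_Suc: "card (support (Suc n) u) = card (support n u) + of_bool (u n = 1)"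
proof -
  have "support (Suc n) u = support n u \<union> (if u n = 1 then {n} else {})"
    by (auto simp: support_def less_Suc_eq)
  then show ?thesis
    by (simp add: support_def)
qed

lemma sum_eq_card_support: "(\<Sum>i<n. u i) = of_nat (card (support n u))"
  by (induction n) (auto simp: card_support_Suc support_def[of 0] bit_not_one_iff)

lemma esym2_Suc: "esym2 (Suc n) u = esym2 n u + u n * (\<Sum>i<n. u i)"
proof -
  have "pairs_lt (Suc n) = pairs_lt n \<union> (\<lambda>i. (i, n)) ` {..<n}"
    by (auto simp: pairs_lt_def less_Suc_eq)
  moreover have "pairs_lt n \<inter> (\<lambda>i. (i, n)) ` {..<n} = {}"
    by (auto simp: pairs_lt_def)
  ultimately show ?thesis
    by (simp add: esym2_def sum.union_disjoint sum.reindex inj_on_def sum_distrib_left mult.commute)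
qed

lemma esym3_Suc: "esym3 (Suc n) u = esym3 n u + u n * esym2 n u"
proof -
  have "triples (Suc n) = triples n \<union> (\<lambda>(i, j). (i, j, n)) ` pairs_lt n"
    by (auto simp: triples_def pairs_lt_def less_Suc_eq)
  moreover have "triples n \<inter> (\<lambda>(i, j). (i, j, n)) ` pairs_lt n = {}"
    by (auto simp: triples_def pairs_lt_def)
  moreover have "inj_on (\<lambda>(i, j). (i, j, n)) (pairs_lt n)"
    by (auto simp: inj_on_def)
  ultimately show ?thesis
    by (simp add: esym3_def esym2_def sum.union_disjoint sum.reindex sum_distrib_left
        split_def ac_simps)
qed

lemma odd_iff_mod_4: "odd (m::nat) \<longleftrightarrow> m mod 4 = 1 \<or> m mod 4 = 3"
  by presburger

lemma esym2_eq: "esym2 n u = of_bool (card (support n u) mod 4 \<in> {2, 3})"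
proof (induction n)
  case 0
  then show ?case
    by (simp add: esym2_def pairs_lt_def support_def cong: Collect_cong)
next
  case (Suc n)
  have "card (support n u) mod 4 \<in> {0, 1, 2, 3}"
    by auto
  moreover note odd_iff_mod_4[of "card (support n u)"]
  ultimately show ?case
    using Suc by (cases "u n") (auto simp: esym2_Suc card_support_Suc sum_eq_card_support
        of_nat_bit_eq mod_Suc)
qed

lemma esym3_eq: "esym3 n u = of_bool (card (support n u) mod 4 = 3)"
proof (induction n)
  case 0
  then show ?case
    by (simp add: esym3_def triples_def support_def cong: Collect_cong)
next
  case (Suc n)
  have "card (support n u) mod 4 \<in> {0, 1, 2, 3}"
    by auto
  then show ?case
    using Suc by (cases "u n") (auto simp: esym3_Suc esym2_eq card_support_Suc mod_Suc)
qed

lemma cubic_form_diag: "cubic_form n u u = esym3 n u"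
  unfolding cubic_form_def esym3_def by (rule sum.cong) (auto simp: ac_simps)

lemma order_form_diag: "order_form n u u = esym2 n u + (\<Sum>i<n. u i)"
proof -
  have "pairs_le n = pairs_lt n \<union> (\<lambda>i. (i, i)) ` {..<n}"
    by (auto simp: pairs_le_def pairs_lt_def)
  moreover have "pairs_lt n \<inter> (\<lambda>i. (i, i)) ` {..<n} = {}"
    by (auto simp: pairs_lt_def)
  ultimately show ?thesis
    by (simp add: order_form_def esym2_def sum.union_disjoint sum.reindex inj_on_def)
qed

lemma diag_form_diag: "diag_form n P u u = of_nat (card (support n u \<inter> P))"
proof -
  have "of_bool (i \<in> P) * u i * u i = of_bool (i \<in> support n u \<inter> P)" if "i < n" for i
    using that by (cases "u i") (simp_all add: support_def)
  then have "diag_form n P u u = (\<Sum>i<n. of_bool (i \<in> support n u \<inter> P))"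
    unfolding diag_form_def by (rule sum.cong[OF refl]) simp
  also have "\<dots> = of_nat (card (support n u \<inter> P))"
    by (simp add: support_def Int_def conj_commute conj_left_commute)
  finally show ?thesis .
qed

definition square_class :: "nat set \<Rightarrow> nat set \<Rightarrow> bit" where
  "square_class P X = of_bool (card X mod 4 = 2) + of_nat (card (X - P))"

lemma twist_diag: "twist n P u u = square_class P (support n u)"
proof -
  define S where "S = support n u"
  have "finite S"
    by (simp add: S_def support_def)
  then have "card S = card (S \<inter> P) + card (S - P)"
    by (rule card_Int_Diff)
  moreover have "card S mod 4 \<in> {0, 1, 2, 3}"
    by auto
  ultimately show ?thesis
    using odd_iff_mod_4[of "card S"]
    by (auto simp: twist_def cubic_form_diag order_form_diag diag_form_diag esym2_eq esym3_eq
        sum_eq_card_support square_class_def of_nat_bit_eq S_def[symmetric])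
qed

section \<open>Equivalence of square forms\<close>

definition square_equivalent :: "nat \<Rightarrow> nat set \<Rightarrow> nat set \<Rightarrow> bool" where
  "square_equivalent n P P' \<longleftrightarrow> (\<exists>F. bij_betw F (Pow {..<n}) (Pow {..<n}) \<and>
     (\<forall>Y\<in>Pow {..<n}. \<forall>Z\<in>Pow {..<n}. F (sym_diff Y Z) = sym_diff (F Y) (F Z)) \<and>
     (\<forall>Y\<in>Pow {..<n}. square_class P' (F Y) = square_class P Y))"

lemma square_equivalentI:
  assumes F: "\<And>Y. Y \<subseteq> {..<n} \<Longrightarrow> F Y \<subseteq> {..<n}" and G: "\<And>Y. Y \<subseteq> {..<n} \<Longrightarrow> G Y \<subseteq> {..<n}"
    and GF: "\<And>Y. Y \<subseteq> {..<n} \<Longrightarrow> G (F Y) = Y" and FG: "\<And>Y. Y \<subseteq> {..<n} \<Longrightarrow> F (G Y) = Y"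
    and additive: "\<And>Y Z. Y \<subseteq> {..<n} \<Longrightarrow> Z \<subseteq> {..<n} \<Longrightarrow> F (sym_diff Y Z) = sym_diff (F Y) (F Z)"
    and square: "\<And>Y. Y \<subseteq> {..<n} \<Longrightarrow> square_class P' (F Y) = square_class P Y"
  shows "square_equivalent n P P'"
  unfolding square_equivalent_def
  by (intro exI[of _ F] conjI bij_betw_byWitness[where f' = G]) (use assms in auto)

lemma square_equivalent_sym:
  assumes "square_equivalent n P P'"
  shows "square_equivalent n P' P"
proof -
  obtain F where bij: "bij_betw F (Pow {..<n}) (Pow {..<n})"
    and additive: "\<And>Y Z. Y \<subseteq> {..<n} \<Longrightarrow> Z \<subseteq> {..<n} \<Longrightarrow> F (sym_diff Y Z) = sym_diff (F Y) (F Z)"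
    and square: "\<And>Y. Y \<subseteq> {..<n} \<Longrightarrow> square_class P' (F Y) = square_class P Y"
    using assms unfolding square_equivalent_def by auto
  define G where "G = inv_into (Pow {..<n}) F"
  have G: "G Y \<subseteq> {..<n}" and FG: "F (G Y) = Y" if "Y \<subseteq> {..<n}" for Y
    using that bij_betw_apply[OF bij_betw_inv_into[OF bij]] bij_betw_inv_into_right[OF bij]
    by (auto simp: G_def)
  have GF: "G (F Y) = Y" if "Y \<subseteq> {..<n}" for Y
    using that bij_betw_inv_into_left[OF bij] by (simp add: G_def)
  show ?thesis
  proof (rule square_equivalentI[where F = G and G = F])
    show "G (sym_diff Y Z) = sym_diff (G Y) (G Z)" if "Y \<subseteq> {..<n}" "Z \<subseteq> {..<n}" for Y Z
    proof -
      have "sym_diff (G Y) (G Z) \<subseteq> {..<n}"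
        using G that by blast
      then have "G (F (sym_diff (G Y) (G Z))) = sym_diff (G Y) (G Z)"
        by (rule GF)
      then show ?thesis
        using additive[OF G G] FG that by simp
    qed
    show "square_class P (G Y) = square_class P' Y" if "Y \<subseteq> {..<n}" for Y
      using that square[OF G] FG by metis
    show "F Y \<subseteq> {..<n}" if "Y \<subseteq> {..<n}" for Y
      using that bij_betw_apply[OF bij] by auto
  qed (use G GF FG in auto)
qed

lemma square_equivalent_trans:
  assumes "square_equivalent n P P'" "square_equivalent n P' P''"
  shows "square_equivalent n P P''"
proof -
  obtain F F'
    where bij: "bij_betw F (Pow {..<n}) (Pow {..<n})" "bij_betw F' (Pow {..<n}) (Pow {..<n})"
    and "\<forall>Y\<in>Pow {..<n}. \<forall>Z\<in>Pow {..<n}. F (sym_diff Y Z) = sym_diff (F Y) (F Z)"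
      "\<forall>Y\<in>Pow {..<n}. \<forall>Z\<in>Pow {..<n}. F' (sym_diff Y Z) = sym_diff (F' Y) (F' Z)"
    and "\<forall>Y\<in>Pow {..<n}. square_class P' (F Y) = square_class P Y"
      "\<forall>Y\<in>Pow {..<n}. square_class P'' (F' Y) = square_class P' Y"
    using assms unfolding square_equivalent_def by blast
  moreover have "F Y \<in> Pow {..<n}" if "Y \<in> Pow {..<n}" for Y
    using bij_betw_apply[OF bij(1) that] .
  ultimately show ?thesis
    unfolding square_equivalent_def
    by (intro exI[of _ "F' \<circ> F"] conjI bij_betw_trans[OF bij(1) bij(2)]) simp_all
qed

definition list_of :: "nat \<Rightarrow> nat set \<Rightarrow> bool list" where
  "list_of n X = map (\<lambda>i. i \<in> X) [0..<n]"

lemma list_of_in_Z2n: "list_of n X \<in> Z2n n"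
  by (simp add: list_of_def Z2n_def)

lemma support_bitvec_list_of: "support n (bitvec (list_of n X)) = X \<inter> {..<n}"
  by (auto simp: list_of_def support_def bitvec_def)

lemma list_of_support_bitvec: "x \<in> Z2n n \<Longrightarrow> list_of n (support n (bitvec x)) = x"
  by (auto simp: list_of_def support_def bitvec_def Z2n_def intro: nth_equalityI)

lemma support_subset: "support n u \<subseteq> {..<n}"
  by (auto simp: support_def)

lemma bij_betw_list_of: "bij_betw (list_of n) (Pow {..<n}) (Z2n n)"
  by (rule bij_betw_byWitness[where f' = "\<lambda>x. support n (bitvec x)"])
    (use support_subset in
      \<open>auto simp: list_of_support_bitvec support_bitvec_list_of list_of_in_Z2n\<close>)

lemma bij_betw_support_bitvec: "bij_betw (\<lambda>x. support n (bitvec x)) (Z2n n) (Pow {..<n})"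
  by (rule bij_betw_byWitness[where f' = "list_of n"])
    (use support_subset in
      \<open>auto simp: list_of_support_bitvec support_bitvec_list_of list_of_in_Z2n\<close>)

lemma support_bitvec_zadd:
  "x \<in> Z2n n \<Longrightarrow> y \<in> Z2n n \<Longrightarrow>
    support n (bitvec (zadd x y)) = sym_diff (support n (bitvec x)) (support n (bitvec y))"
  by (auto simp: support_def bitvec_def zadd_def Z2n_def)

lemma Ograded_isomorphic_if_square_equivalent:
  assumes dim: "p' + q' = p + q" and equiv: "square_equivalent (p + q) {..<p} {..<p'}"
  shows "Ograded_isomorphic p q p' q'"
proof -
  let ?n = "p + q"
  obtain F where bij: "bij_betw F (Pow {..<?n}) (Pow {..<?n})"
    and additive: "\<And>Y Z. Y \<subseteq> {..<?n} \<Longrightarrow> Z \<subseteq> {..<?n} \<Longrightarrow> F (sym_diff Y Z) = sym_diff (F Y) (F Z)"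
    and square: "\<And>Y. Y \<subseteq> {..<?n} \<Longrightarrow> square_class {..<p'} (F Y) = square_class {..<p} Y"
    using equiv unfolding square_equivalent_def by auto
  define \<phi> where "\<phi> x = list_of ?n (F (support ?n (bitvec x)))" for x
  have F_support: "F (support ?n (bitvec x)) \<subseteq> {..<?n}" if "x \<in> Z2n ?n" for x
    using bij_betw_apply[OF bij] support_subset by auto
  have support_\<phi>: "support ?n (bitvec (\<phi> x)) = F (support ?n (bitvec x))" if "x \<in> Z2n ?n" for x
    using F_support[OF that] by (auto simp: \<phi>_def support_bitvec_list_of)
  have \<phi>_bij: "bij_betw \<phi> (Z2n ?n) (Z2n ?n)"
    unfolding \<phi>_def
    using bij_betw_trans[OF bij_betw_trans[OF bij_betw_support_bitvec bij] bij_betw_list_of]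
    by (simp add: comp_def)
  have \<phi>_additive: "\<phi> (zadd x y) = zadd (\<phi> x) (\<phi> y)" if "x \<in> Z2n ?n" "y \<in> Z2n ?n" for x y
  proof -
    have "support ?n (bitvec (\<phi> (zadd x y))) = support ?n (bitvec (zadd (\<phi> x) (\<phi> y)))"
      using that bij_betw_apply[OF \<phi>_bij]
      by (simp add: support_\<phi> support_bitvec_zadd zadd_in_Z2n additive F_support support_subset)
    then show ?thesis
      using that bij_betw_apply[OF \<phi>_bij] zadd_in_Z2n by (metis list_of_support_bitvec)
  qed
  have "\<exists>s. \<forall>x\<in>Z2n ?n. \<forall>y\<in>Z2n ?n. twist ?n {..<p'} (bitvec (\<phi> x)) (bitvec (\<phi> y))
      = twist ?n {..<p} (bitvec x) (bitvec y) + s x + s y + s (zadd x y)"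
  proof (rule twist_cohomologous_if_square_preserved)
    show "\<phi> x \<in> Z2n ?n" if "x \<in> Z2n ?n" for x
      using bij_betw_apply[OF \<phi>_bij that] .
    show "twist ?n {..<p'} (bitvec (\<phi> x)) (bitvec (\<phi> x)) = twist ?n {..<p} (bitvec x) (bitvec x)"
      if "x \<in> Z2n ?n" for x
      using that by (simp add: twist_diag support_\<phi> square support_subset)
  qed (rule \<phi>_additive)
  then show ?thesis
    using Ograded_isomorphic_if_twist_cohomologous[OF dim \<phi>_bij \<phi>_additive] by blast
qed

lemma card_sym_diff:
  assumes "finite A" "finite B"
  shows "card (sym_diff A B) + 2 * card (A \<inter> B) = card A + card B"
proof -
  have "card (sym_diff A B) = card (A - B) + card (B - A)"
    using assms by (subst card_Un_disjoint) auto
  moreover have "card A = card (A \<inter> B) + card (A - B)" "card B = card (B \<inter> A) + card (B - A)"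
    using assms by (simp_all add: card_Int_Diff)
  ultimately show ?thesis
    by (simp add: Int_commute)
qed

lemma even_card_sym_diff:
  "finite A \<Longrightarrow> finite B \<Longrightarrow> even (card (sym_diff A B)) \<longleftrightarrow> (even (card A) \<longleftrightarrow> even (card B))"
  using card_sym_diff[of A B] by (metis even_add even_mult_iff even_numeral)

lemma square_class_eqI:
  "(card X mod 4 = 2 \<longleftrightarrow> card X' mod 4 = 2) \<Longrightarrow> (even (card (X - P)) \<longleftrightarrow> even (card (X' - P'))) \<Longrightarrow>
    square_class P X = square_class P' X'"
  by (simp add: square_class_def of_nat_bit_eq)

lemma permutation_mapping_subset:
  assumes "finite A" "P \<subseteq> A" "P' \<subseteq> A" "card P = card P'"
  obtains \<pi> where "bij_betw \<pi> A A" "\<pi> ` P = P'"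
proof -
  have fin: "finite P" "finite P'" "finite (A - P)" "finite (A - P')"
    using assms finite_subset by auto
  obtain f where f: "bij_betw f P P'"
    using finite_same_card_bij[OF fin(1,2) assms(4)] by blast
  have "card (A - P) = card (A - P')"
    using assms fin by (simp add: card_Diff_subset)
  then obtain g where g: "bij_betw g (A - P) (A - P')"
    using finite_same_card_bij[OF fin(3,4)] by blast
  define \<pi> where "\<pi> x = (if x \<in> P then f x else g x)" for x
  have "bij_betw \<pi> (P \<union> (A - P)) (P' \<union> (A - P'))"
    unfolding \<pi>_def by (rule bij_betw_disjoint_Un[OF f g]) auto
  moreover have "\<pi> ` P = P'"
    using f by (simp add: \<pi>_def bij_betw_def)
  ultimately show ?thesis
    using that assms by (simp add: Un_absorb1)
qed

lemma square_equivalent_of_card: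
  assumes P: "P \<subseteq> {..<n}" and P': "P' \<subseteq> {..<n}" and card: "card P = card P'"
  shows "square_equivalent n P P'"
proof -
  obtain \<pi> where \<pi>: "bij_betw \<pi> {..<n} {..<n}" and \<pi>_P: "\<pi> ` P = P'"
    using permutation_mapping_subset[OF _ P P' card] by blast
  have inj: "inj_on \<pi> {..<n}"
    using \<pi> by (rule bij_betw_imp_inj_on)
  define G where "G Y = {i. i < n \<and> \<pi> i \<in> Y}" for Y
  show ?thesis
  proof (rule square_equivalentI[where F = "image \<pi>" and G = G])
    show "\<pi> ` Y \<subseteq> {..<n}" if "Y \<subseteq> {..<n}" for Y
      using that bij_betw_imp_surj_on[OF \<pi>] by blast
    show "G (\<pi> ` Y) = Y" if "Y \<subseteq> {..<n}" for Y
      using that inj by (auto simp: G_def inj_on_def)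
    show "\<pi> ` G Y = Y" if "Y \<subseteq> {..<n}" for Y
      using that bij_betw_imp_surj_on[OF \<pi>] by (auto simp: G_def)
    show "\<pi> ` sym_diff Y Z = sym_diff (\<pi> ` Y) (\<pi> ` Z)" if "Y \<subseteq> {..<n}" "Z \<subseteq> {..<n}" for Y Z
      using that inj_on_image_set_diff[OF inj, of Y Z] inj_on_image_set_diff[OF inj, of Z Y]
      by (metis Diff_subset image_Un subset_trans)
    show "square_class P' (\<pi> ` Y) = square_class P Y" if "Y \<subseteq> {..<n}" for Y
    proof -
      have "\<pi> ` Y - P' = \<pi> ` (Y - P)"
        using inj_on_image_set_diff[OF inj, of Y P] that P unfolding \<pi>_P by blast
      moreover have "inj_on \<pi> Y" "inj_on \<pi> (Y - P)"
        using that inj_on_subset[OF inj] by blast+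
      ultimately show ?thesis
        by (simp add: square_class_def card_image)
    qed
  qed (auto simp: G_def)
qed

\<comment> \<open>The map Y \<mapsto> Y + \<langle>Y, D\<rangle> U of F_2^n; it is a linear involution when \<langle>U, D\<rangle> = 0.\<close>
definition transvection :: "nat set \<Rightarrow> nat set \<Rightarrow> nat set \<Rightarrow> nat set" where
  "transvection D U Y = (if odd (card (Y \<inter> D)) then sym_diff Y U else Y)"

lemma square_equivalent_transvection:
  assumes U: "U \<subseteq> {..<n}" and D: "finite D" and orth: "even (card (U \<inter> D))"
    and square: "\<And>Y. Y \<subseteq> {..<n} \<Longrightarrow> square_class P' (transvection D U Y) = square_class P Y"
  shows "square_equivalent n P P'"
proof -
  have parity:
    "even (card (sym_diff Y Z \<inter> D)) \<longleftrightarrow> (even (card (Y \<inter> D)) \<longleftrightarrow> even (card (Z \<inter> D)))"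
    for Y Z
  proof -
    have "sym_diff Y Z \<inter> D = sym_diff (Y \<inter> D) (Z \<inter> D)"
      by blast
    then show ?thesis
      using even_card_sym_diff[of "Y \<inter> D" "Z \<inter> D"] D by simp
  qed
  have involution: "transvection D U (transvection D U Y) = Y" for Y
    using parity[of Y U] orth by (auto simp: transvection_def)
  have closed: "transvection D U Y \<subseteq> {..<n}" if "Y \<subseteq> {..<n}" for Y
    using that U by (auto simp: transvection_def)
  show ?thesis
  proof (rule square_equivalentI[where F = "transvection D U" and G = "transvection D U"])
    show "transvection D U (sym_diff Y Z) = sym_diff (transvection D U Y) (transvection D U Z)"
      for Y Z
      using parity[of Y Z] by (auto simp: transvection_def)
  qed (use closed involution square in auto)
qed

lemma square_equivalent_complement:
  assumes P: "P \<subseteq> {..<n}" and a: "a \<in> P" and b: "b < n" "b \<notin> P"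
  shows "square_equivalent n ({..<n} - P) P"
proof (rule square_equivalent_transvection[where D = "{..<n}" and U = "{a, b}"])
  show "finite {..<n}"
    by simp
  have ab: "a \<noteq> b"
    using a b by auto
  show "{a, b} \<subseteq> {..<n}"
    using a b P by auto
  then show "even (card ({a, b} \<inter> {..<n}))"
    using ab by (simp add: Int_absorb2)
  fix Y assume Y: "Y \<subseteq> {..<n}"
  then have fin: "finite Y" and Y_n: "Y \<inter> {..<n} = Y" and Y_comp: "Y - ({..<n} - P) = Y \<inter> P"
    by (auto intro: finite_subset)
  have split: "card Y = card (Y \<inter> P) + card (Y - P)"
    using fin by (rule card_Int_Diff)
  show "square_class P (transvection {..<n} {a, b} Y) = square_class ({..<n} - P) Y"
  proof (cases "even (card Y)")
    case True
    then show ?thesis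
      using split by (intro square_class_eqI) (auto simp: transvection_def Y_n Y_comp)
  next
    case False
    let ?T = "sym_diff Y {a, b}"
    have "card ?T + 2 * card (Y \<inter> {a, b}) = card Y + 2"
      using card_sym_diff[OF fin, of "{a, b}"] ab by simp
    then have "odd (card ?T)"
      using False by presburger
    moreover have "?T - P = sym_diff (Y - P) {b}"
      using a b by auto
    then have "even (card (?T - P)) \<longleftrightarrow> even (card (Y \<inter> P))"
      using False split even_card_sym_diff[of "Y - P" "{b}"] fin by simp
    moreover have "odd m \<Longrightarrow> m mod 4 \<noteq> 2" for m :: nat
      by presburger
    ultimately show ?thesis
      using False by (intro square_class_eqI) (simp_all add: transvection_def Y_n Y_comp)
  qed
qed

lemma square_equivalent_sym_diff_six:
  assumes G: "G \<subseteq> {..<n}" "card G = 6" "card (G - P) = 1"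
  shows "square_equivalent n (sym_diff P G) P"
proof (rule square_equivalent_transvection[where D = G and U = G])
  have fin_G: "finite G"
    using G finite_subset by blast
  then show "finite G" "G \<subseteq> {..<n}" "even (card (G \<inter> G))"
    using G by simp_all
  fix Y assume "Y \<subseteq> {..<n}"
  then have fin: "finite Y"
    by (rule finite_subset) simp
  have "Y - sym_diff P G = sym_diff (Y - P) (Y \<inter> G)"
    by blast
  then have parity: "even (card (Y - sym_diff P G)) \<longleftrightarrow> (even (card (Y - P)) \<longleftrightarrow> even (card (Y \<inter> G)))"
    using even_card_sym_diff[of "Y - P" "Y \<inter> G"] fin by simp
  show "square_class P (transvection G G Y) = square_class (sym_diff P G) Y"
  proof (cases "even (card (Y \<inter> G))")
    case True
    then show ?thesis
      using parity by (intro square_class_eqI) (simp_all add: transvection_def)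
  next
    case False
    let ?T = "sym_diff Y G"
    have "card ?T + 2 * card (Y \<inter> G) = card Y + 6"
      using card_sym_diff[OF fin fin_G] G by simp
    then have "card ?T mod 4 = 2 \<longleftrightarrow> card Y mod 4 = 2"
      using False by presburger
    moreover have "?T - P = sym_diff (Y - P) (G - P)"
      by blast
    then have "even (card (?T - P)) \<longleftrightarrow> odd (card (Y - P))"
      using even_card_sym_diff[of "Y - P" "G - P"] fin fin_G G by simp
    ultimately show ?thesis
      using False parity by (intro square_class_eqI) (simp_all add: transvection_def)
  qed
qed

lemma square_equivalent_initial_minus_4:
  assumes "5 \<le> a" "a < n"
  shows "square_equivalent n {..<a} {..<a - 4}"
proof -
  define G where "G = {a - 5..a}"
  have "G - {..<a} = {a}"
    using assms by (auto simp: G_def)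
  then have G: "G \<subseteq> {..<n}" "card G = 6" "card (G - {..<a}) = 1"
    using assms by (auto simp: G_def)
  have "G \<inter> {..<a} = {a - 5..<a}"
    using assms by (auto simp: G_def)
  then have "card (sym_diff {..<a} G) + 2 * 5 = a + 6"
    using card_sym_diff[of "{..<a}" G] G assms by (simp add: G_def Int_commute)
  then have "card (sym_diff {..<a} G) = card {..<a - 4}"
    by simp
  then have "square_equivalent n (sym_diff {..<a} G) {..<a - 4}"
    using G assms by (intro square_equivalent_of_card) auto
  then show ?thesis
    using square_equivalent_sym[OF square_equivalent_sym_diff_six[OF G]] square_equivalent_trans
    by blast
qed

lemma square_equivalent_initial_complement:
  assumes "1 \<le> a" "a < n"
  shows "square_equivalent n {..<a} {..<n - a}"
proof -
  have "square_equivalent n ({..<n} - {..<a}) {..<a}"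
    using assms by (intro square_equivalent_complement[of _ _ 0 a]) auto
  moreover have "square_equivalent n ({..<n} - {..<a}) {..<n - a}"
    using assms by (intro square_equivalent_of_card) auto
  ultimately show ?thesis
    using square_equivalent_sym square_equivalent_trans by blast
qed

lemma square_equivalent_initial_mod_4:
  assumes "1 \<le> a" "a < n" "1 \<le> b" "b < n" "a mod 4 = b mod 4"
  shows "square_equivalent n {..<a} {..<b}"
proof -
  have step: "square_equivalent n {..<c + 4 * m} {..<c}" if "1 \<le> c" "c + 4 * m < n" for c m
    using that
  proof (induction m)
    case 0
    show ?case
      using "0.prems" by (intro square_equivalent_of_card) auto
  next
    case (Suc m)
    have "square_equivalent n {..<c + 4 * Suc m} {..<c + 4 * m}"
      using square_equivalent_initial_minus_4[of "c + 4 * Suc m" n] Suc.prems by simp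
    then show ?case
      using Suc square_equivalent_trans by simp
  qed
  show ?thesis
  proof (cases "b \<le> a")
    case True
    then obtain m where "a = b + 4 * m"
      using assms(5) by (metis le_add_diff_inverse mod_eq_dvd_iff_nat dvd_def)
    then show ?thesis
      using step[of b m] assms by simp
  next
    case False
    then obtain m where "b = a + 4 * m"
      using assms(5) by (metis le_add_diff_inverse nat_le_linear mod_eq_dvd_iff_nat dvd_def)
    then show ?thesis
      using step[of a m] assms square_equivalent_sym by simp
  qed
qed

lemma mod_4_of_even_complement:
  fixes p q k :: nat
  assumes "p + q = 4 * k + 1" "even p"
  shows "q mod 4 = (p + 1) mod 4"
proof -
  obtain j where p: "p = 2 * j"
    using assms(2) by blast
  have "int q = int (p + 1) + 4 * (int k - int j)"
    using arg_cong[OF assms(1), of int] p by simp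
  then have "int q mod 4 = int (p + 1) mod 4"
    by (metis mod_mult_self2)
  then have "int (q mod 4) = int ((p + 1) mod 4)"
    by (simp only: zmod_int of_nat_numeral)
  then show ?thesis
    by (simp only: of_nat_eq_iff)
qed

theorem mainTheorem7:
  fixes p q k :: nat
  assumes "p + q = 4 * k + 1" and "k \<ge> 1"
  shows "(p - 4 \<ge> 1 \<and> q \<ge> 1 \<longrightarrow> Ograded_isomorphic p q (p - 4) (q + 4))
       \<and> (p \<ge> 1 \<and> q - 1 \<ge> 1 \<and> even p \<longrightarrow> Ograded_isomorphic p q (p + 1) (q - 1))"
proof (intro conjI impI)
  assume "p - 4 \<ge> 1 \<and> q \<ge> 1"
  then have "5 \<le> p" "1 \<le> q"
    by arith+
  moreover have "p mod 4 = (p - 4) mod 4"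
    using mod_add_self2[of "p - 4" 4] \<open>5 \<le> p\<close> by simp
  ultimately have "square_equivalent (p + q) {..<p} {..<p - 4}"
    by (intro square_equivalent_initial_mod_4) simp_all
  then show "Ograded_isomorphic p q (p - 4) (q + 4)"
    using \<open>5 \<le> p\<close> by (intro Ograded_isomorphic_if_square_equivalent) simp_all
next
  assume "p \<ge> 1 \<and> q - 1 \<ge> 1 \<and> even p"
  then have "1 \<le> p" "2 \<le> q" "even p"
    by arith+
  then have "square_equivalent (p + q) {..<p} {..<q}"
    using square_equivalent_initial_complement[of p "p + q"] by simp
  moreover have "square_equivalent (p + q) {..<q} {..<p + 1}"
    using \<open>1 \<le> p\<close> \<open>2 \<le> q\<close> mod_4_of_even_complement[OF assms(1) \<open>even p\<close>]
    by (intro square_equivalent_initial_mod_4) simp_all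
  ultimately have "square_equivalent (p + q) {..<p} {..<p + 1}"
    by (rule square_equivalent_trans)
  then show "Ograded_isomorphic p q (p + 1) (q - 1)"
    using \<open>2 \<le> q\<close> by (intro Ograded_isomorphic_if_square_equivalent) simp_all
qed

end
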